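(* Let $R$ be a ring (associative, not necessarily unital). Then the set of nilpotent elements of the polynomial ring $R[x]$ is a subring of $R[x]$ if and only if $\operatorname{Nil}(R)[x]=\operatorname{Nil}(R[x])$.
   Context: $\operatorname{Nil}(S)$ denotes the set of nilpotent elements of a ring $S$; $\operatorname{Nil}(R)[x]$ denotes the set of polynomials in $R[x]$ all of whose coefficients lie in $\operatorname{Nil}(R)$. *)

theory Defs
  imports "HOL-Computational_Algebra.Polynomial"
begin

text \<open>The library multiplication on polynomials
needs commutativity, so the (noncommutative) Cauchy product is defined here;
the indeterminate x commutes with coefficients.\<close>

definition pmult :: "'a::ring poly \<Rightarrow> 'a poly \<Rightarrow> 'a poly" where
  "pmult p q = (\<Sum>i\<le>degree p. \<Sum>j\<le>degree q. monom (coeff p i * coeff q j) (i + j))"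

text \<open>Positive powers w.r.t. a multiplication (no unit available):
mpow m x n = x^(n+1).\<close>

fun mpow :: "('b \<Rightarrow> 'b \<Rightarrow> 'b) \<Rightarrow> 'b \<Rightarrow> nat \<Rightarrow> 'b" where
  "mpow m x 0 = x"
| "mpow m x (Suc n) = m (mpow m x n) x"

definition Nil_of :: "('b \<Rightarrow> 'b \<Rightarrow> 'b) \<Rightarrow> 'b::zero set" where
  "Nil_of m = {x. \<exists>n. mpow m x n = 0}"

abbreviation NilR :: "'a::ring set" where
  "NilR \<equiv> Nil_of (*)"

abbreviation NilRx :: "'a::ring poly set" where
  "NilRx \<equiv> Nil_of pmult"

definition NilR_poly :: "'a::ring poly set" where
  "NilR_poly = {p. \<forall>i. coeff p i \<in> NilR}"

definition is_subring_poly :: "'a::ring poly set \<Rightarrow> bool" where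
  "is_subring_poly S \<longleftrightarrow> 0 \<in> S \<and> (\<forall>a\<in>S. \<forall>b\<in>S. a - b \<in> S \<and> pmult a b \<in> S)"

end

theory Submission
  imports Defs "HOL-Computational_Algebra.Polynomial_FPS"
begin

unbundle fps_syntax

text \<open>
Forward direction: if \<open>Nil(R[x])\<close> is closed under subtraction, a nilpotent polynomial
can be stripped of its leading monomial, whose coefficient is nilpotent since the leading
coefficient of \<open>p\<^sup>n = 0\<close> is \<open>lead_coeff p\<^sup>n\<close>; conversely,
monomials with nilpotent coefficients are nilpotent.

Backward direction: \<open>Nil(R)[x] \<subseteq> Nil(R[x])\<close> already makes \<open>Nil(R)\<close>
a subring of \<open>R\<close>, and then coefficients of sums and products in \<open>Nil(R)[x]\<close>
stay nilpotent. Evaluating \<open>x - y\<close> at \<open>1\<close> gives closure under subtraction.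
For products, let \<open>a + (y - a y) x\<close> be nilpotent in \<open>R[x] \<subseteq> R[[x]]\<close>:
from its quasi-inverse one builds a power series \<open>Z\<close> with \<open>Z = y x + Z y x\<close>,
so the coefficients of \<open>Z\<close> are the powers of \<open>y\<close>, yet \<open>Z\<close> is a
polynomial; hence \<open>y\<close> is nilpotent. For nilpotent \<open>a, b\<close>, the choice
\<open>y = b + a b + a\<^sup>2 b + \<dots>\<close> shows that \<open>a b + a\<^sup>2 b + \<dots>\<close>
is nilpotent, and a downward induction on \<open>k\<close> (with \<open>a\<^sup>k\<close> in place of
\<open>a\<close>) then shows that every \<open>a\<^sup>k b\<close> is nilpotent.
\<close>

section \<open>Positive powers\<close>

lemma mpow_eq_0_mono:
  fixes x :: "'b::semiring_0"
  assumes "mpow (*) x n = 0" "n \<le> k"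
  shows "mpow (*) x k = 0"
  using assms(2)
proof (induction k)
  case (Suc k)
  then show ?case using assms(1) by (cases "n = Suc k") auto
qed (use assms in simp)

lemma mpow_Suc_add:
  fixes x :: "'b::semiring_0"
  shows "mpow (*) x (Suc (i + j)) = mpow (*) x i * mpow (*) x j"
  by (induction j) (auto simp: mult.assoc)

lemma mpow_mpow:
  fixes x :: "'b::semiring_0"
  shows "mpow (*) (mpow (*) x k) j = mpow (*) x (Suc k * Suc j - 1)"
proof (induction j)
  case (Suc j)
  have "mpow (*) (mpow (*) x k) (Suc j) = mpow (*) x (Suc k * Suc j - 1) * mpow (*) x k"
    using Suc by simp
  also have "\<dots> = mpow (*) x (Suc (Suc k * Suc j - 1 + k))"
    by (rule mpow_Suc_add[symmetric])
  also have "Suc (Suc k * Suc j - 1 + k) = Suc k * Suc (Suc j) - 1"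
    by simp
  finally show ?case .
qed simp

lemma mpow_uminus:
  fixes y :: "'b::ring"
  shows "mpow (*) (- y) n = (if even n then - mpow (*) y n else mpow (*) y n)"
  by (induction n) auto

lemma zero_mem_Nil_of: "(0::'b::semiring_0) \<in> Nil_of (*)"
  unfolding Nil_of_def by (auto intro!: exI[of _ 0])

lemma uminus_mem_Nil_of: "(y::'b::ring) \<in> Nil_of (*) \<Longrightarrow> - y \<in> Nil_of (*)"
  unfolding Nil_of_def by (auto simp: mpow_uminus)

lemma sum_mpow_quasi_inverse:
  fixes f :: "'b::ring"
  assumes "mpow (*) f n = 0"
  shows "(\<Sum>i\<le>n. mpow (*) f i) * f = (\<Sum>i\<le>n. mpow (*) f i) - f"
proof -
  have "(\<Sum>i\<le>n. mpow (*) f i) * f = (\<Sum>i\<le>n. mpow (*) f (Suc i))"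
    by (simp add: sum_distrib_right)
  also have "\<dots> = (\<Sum>i\<le>Suc n. mpow (*) f i) - f"
    by (subst sum.atMost_Suc_shift) simp
  also have "\<dots> = (\<Sum>i\<le>n. mpow (*) f i) - f"
    using assms by simp
  finally show ?thesis .
qed

section \<open>The Cauchy product\<close>

lemma coeff_pmult: "coeff (pmult p q) n = (\<Sum>i=0..n. coeff p i * coeff q (n - i))"
proof -
  have inner: "(\<Sum>j\<le>degree q. if i + j = n then coeff p i * coeff q j else 0)
      = (if i \<le> n then coeff p i * coeff q (n - i) else 0)" for i
  proof (cases "i \<le> n \<and> n - i \<le> degree q")
    case True
    have "(\<Sum>j\<le>degree q. if i + j = n then coeff p i * coeff q j else 0)
        = (\<Sum>j\<le>degree q. if j = n - i then coeff p i * coeff q j else 0)"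
      by (rule sum.cong) (use True in auto)
    then show ?thesis using True by simp
  next
    case False
    then show ?thesis by (auto simp: coeff_eq_0 intro!: sum.neutral)
  qed
  have "coeff (pmult p q) n
      = (\<Sum>i\<le>degree p. \<Sum>j\<le>degree q. if i + j = n then coeff p i * coeff q j else 0)"
    by (simp add: pmult_def coeff_sum)
  also have "\<dots> = (\<Sum>i\<le>degree p. if i \<le> n then coeff p i * coeff q (n - i) else 0)"
    using inner by simp
  also have "\<dots> = (\<Sum>i\<in>{..degree p} \<inter> {..n}. coeff p i * coeff q (n - i))"
    by (simp add: sum.inter_restrict atMost_def)
  also have "\<dots> = (\<Sum>i=0..n. coeff p i * coeff q (n - i))"
    by (rule sum.mono_neutral_left) (auto, metis coeff_eq_0 mult_zero_left not_le)
  finally show ?thesis .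
qed

lemma fps_of_poly_pmult: "fps_of_poly (pmult p q) = fps_of_poly p * fps_of_poly q"
  by (rule fps_ext) (simp add: fps_mult_nth coeff_pmult)

lemma fps_of_poly_mpow: "fps_of_poly (mpow pmult p n) = mpow (*) (fps_of_poly p) n"
  by (induction n) (auto simp: fps_of_poly_pmult)

lemma coeff_pmult_eq_0:
  assumes "degree p \<le> m" "degree q \<le> n" "m + n < k"
  shows "coeff (pmult p q) k = 0"
proof -
  have "coeff p i * coeff q (k - i) = 0" for i
  proof (cases "i \<le> m")
    case True
    then have "degree q < k - i"
      using assms by linarith
    then show ?thesis by (simp add: coeff_eq_0)
  next
    case False
    then show ?thesis using assms(1) by (simp add: coeff_eq_0)
  qed
  then show ?thesis
    by (simp add: coeff_pmult)
qed

lemma coeff_pmult_top: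
  assumes "degree p \<le> m" "degree q \<le> n"
  shows "coeff (pmult p q) (m + n) = coeff p m * coeff q n"
proof -
  have "coeff p i * coeff q (m + n - i) = (if i = m then coeff p m * coeff q n else 0)" for i
    using assms by (cases i m rule: linorder_cases) (auto simp: coeff_eq_0)
  then show ?thesis
    by (simp add: coeff_pmult)
qed

lemma degree_pmult_le: "degree (pmult p q) \<le> degree p + degree q"
  by (rule degree_le) (auto intro: coeff_pmult_eq_0)

lemma degree_mpow_pmult_le: "degree (mpow pmult p n) \<le> Suc n * degree p"
proof (induction n)
  case (Suc n)
  then show ?case
    using degree_pmult_le[of "mpow pmult p n" p] by simp
qed simp

lemma coeff_mpow_pmult_top: "coeff (mpow pmult p n) (Suc n * degree p) = mpow (*) (lead_coeff p) n"
proof (induction n)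
  case (Suc n)
  have "Suc (Suc n) * degree p = Suc n * degree p + degree p"
    by simp
  then have "coeff (mpow pmult p (Suc n)) (Suc (Suc n) * degree p)
      = coeff (pmult (mpow pmult p n) p) (Suc n * degree p + degree p)"
    by (simp only: mpow.simps)
  also have "\<dots> = mpow (*) (lead_coeff p) n * lead_coeff p"
    using Suc coeff_pmult_top[OF degree_mpow_pmult_le[of p n] order_refl[of "degree p"]] by simp
  finally show ?case
    by simp
qed simp

lemma pmult_monom: "pmult (monom a i) (monom b j) = monom (a * b) (i + j)"
proof (rule poly_eqI)
  fix k
  have deg: "degree (monom a i) \<le> i" "degree (monom b j) \<le> j"
    by (simp_all add: degree_monom_le)
  consider "k < i + j" | "k = i + j" | "i + j < k"
    by linarith
  then show "coeff (pmult (monom a i) (monom b j)) k = coeff (monom (a * b) (i + j)) k"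
  proof cases
    case 1
    then show ?thesis by (auto simp: coeff_pmult intro!: sum.neutral)
  qed (use coeff_pmult_top[OF deg] coeff_pmult_eq_0[OF deg] in auto)
qed

lemma mpow_pmult_monom: "mpow pmult (monom c i) n = monom (mpow (*) c n) (Suc n * i)"
  by (induction n) (auto simp: pmult_monom add.commute)

section \<open>Evaluation at one\<close>

definition sum_coeffs :: "'a::ring poly \<Rightarrow> 'a" where
  "sum_coeffs p = (\<Sum>i\<le>degree p. coeff p i)"

lemma sum_coeffs_eq: "degree p \<le> N \<Longrightarrow> sum_coeffs p = (\<Sum>i\<le>N. coeff p i)"
  unfolding sum_coeffs_def by (rule sum.mono_neutral_left) (auto simp: coeff_eq_0)

lemma sum_coeffs_add: "sum_coeffs (p + q) = sum_coeffs p + sum_coeffs q"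
proof -
  let ?N = "max (degree p) (degree q)"
  have "degree (p + q) \<le> ?N"
    by (rule degree_add_le) auto
  then show ?thesis
    by (simp add: sum_coeffs_eq[of _ ?N] sum.distrib)
qed

lemma sum_coeffs_sum: "sum_coeffs (sum f I) = (\<Sum>i\<in>I. sum_coeffs (f i))"
  by (induction I rule: infinite_finite_induct) (simp_all add: sum_coeffs_add sum_coeffs_def[of 0])

lemma sum_coeffs_monom: "sum_coeffs (monom c k) = c"
  by (simp add: sum_coeffs_eq[of _ k] degree_monom_le)

lemma sum_coeffs_pmult: "sum_coeffs (pmult p q) = sum_coeffs p * sum_coeffs q"
proof -
  have "sum_coeffs (pmult p q) = (\<Sum>i\<le>degree p. \<Sum>j\<le>degree q. coeff p i * coeff q j)"
    unfolding pmult_def by (simp add: sum_coeffs_sum sum_coeffs_monom)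
  then show ?thesis
    by (simp add: sum_coeffs_def sum_product)
qed

lemma sum_coeffs_mpow: "sum_coeffs (mpow pmult p n) = mpow (*) (sum_coeffs p) n"
  by (induction n) (auto simp: sum_coeffs_pmult)

section \<open>Nilpotent polynomials when \<open>Nil(R[x])\<close> is a subring\<close>

lemma monom_mem_NilRx: "(c :: 'a::ring) \<in> NilR \<Longrightarrow> monom c i \<in> NilRx"
  unfolding Nil_of_def by (auto simp: mpow_pmult_monom)

lemma lead_coeff_mem_NilR:
  assumes "(p :: 'a::ring poly) \<in> NilRx"
  shows "lead_coeff p \<in> NilR"
proof -
  obtain n where "mpow pmult p n = 0"
    using assms by (auto simp: Nil_of_def)
  then have "mpow (*) (lead_coeff p) n = 0"
    using coeff_mpow_pmult_top[of p n] by simp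
  then show ?thesis
    by (auto simp: Nil_of_def)
qed

lemma is_subring_poly_sum_mem:
  assumes "is_subring_poly S" "\<And>i. i \<in> I \<Longrightarrow> f i \<in> S"
  shows "sum f I \<in> S"
  using assms(2)
proof (induction I rule: infinite_finite_induct)
  case (insert i I)
  have diff: "a - b \<in> S" if "a \<in> S" "b \<in> S" for a b
    using assms(1) that by (simp add: is_subring_poly_def)
  have "f i - (0 - sum f I) \<in> S"
    using assms(1) insert by (intro diff) (simp_all add: is_subring_poly_def)
  then show ?case
    using insert by simp
qed (use assms(1) in \<open>simp_all add: is_subring_poly_def\<close>)

lemma NilR_poly_subset_NilRx:
  assumes "is_subring_poly (NilRx :: 'a::ring poly set)"
  shows "NilR_poly \<subseteq> (NilRx :: 'a poly set)"
proof
  fix p :: "'a poly"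
  assume "p \<in> NilR_poly"
  then have coeff_p: "coeff p i \<in> NilR" for i
    by (simp add: NilR_poly_def)
  have "(\<Sum>i\<le>degree p. monom (coeff p i) i) \<in> NilRx"
    by (intro is_subring_poly_sum_mem[OF assms] monom_mem_NilRx coeff_p)
  then show "p \<in> NilRx"
    by (simp add: poly_as_sum_of_monoms)
qed

lemma coeff_mem_NilR_if_subring:
  assumes "is_subring_poly (NilRx :: 'a::ring poly set)" "(p :: 'a poly) \<in> NilRx"
  shows "coeff p i \<in> NilR"
  using assms(2)
proof (induction "degree p" arbitrary: p i rule: less_induct)
  case less
  consider "i = degree p" | "degree p < i" | "i < degree p"
    by linarith
  then show ?case
  proof cases
    case 1
    then show ?thesis using lead_coeff_mem_NilR[OF less.prems] by simp
  next
    case 2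
    then show ?thesis by (simp add: coeff_eq_0 zero_mem_Nil_of)
  next
    case 3
    define q where "q = p - monom (lead_coeff p) (degree p)"
    have "q \<in> NilRx"
      using assms(1) less.prems monom_mem_NilRx[OF lead_coeff_mem_NilR[OF less.prems]]
      unfolding q_def is_subring_poly_def by blast
    moreover have "degree q < degree p"
    proof (rule degree_lessI)
      show "\<forall>k\<ge>degree p. coeff q k = 0"
        by (auto simp: q_def coeff_eq_0)
    qed (use 3 in simp)
    ultimately have "coeff q i \<in> NilR"
      by (rule less.hyps[rotated])
    then show ?thesis
      using 3 by (simp add: q_def)
  qed
qed

lemma NilRx_eq_NilR_poly_if_subring:
  assumes "is_subring_poly (NilRx :: 'a::ring poly set)"
  shows "NilR_poly = (NilRx :: 'a poly set)"
  using NilR_poly_subset_NilRx[OF assms] coeff_mem_NilR_if_subring[OF assms]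
  by (auto simp: NilR_poly_def)

section \<open>\<open>Nil(R)\<close> is a subring when \<open>Nil(R)[x] \<subseteq> Nil(R[x])\<close>\<close>

lemma pCons_mem_NilR_poly:
  "(a :: 'a::ring) \<in> NilR \<Longrightarrow> b \<in> NilR \<Longrightarrow> [:a, b:] \<in> NilR_poly"
  unfolding NilR_poly_def by (auto simp: coeff_pCons zero_mem_Nil_of split: nat.splits)

lemma NilR_diff_closed:
  assumes "(NilR_poly :: 'a::ring poly set) \<subseteq> NilRx" "(x :: 'a) \<in> NilR" "y \<in> NilR"
  shows "x - y \<in> NilR"
proof -
  have "[:x, - y:] \<in> NilRx"
    using assms pCons_mem_NilR_poly uminus_mem_Nil_of by blast
  then obtain n where "mpow pmult [:x, - y:] n = 0"
    by (auto simp: Nil_of_def)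
  then have "mpow (*) (sum_coeffs [:x, - y:]) n = 0"
    by (metis sum_coeffs_mpow sum_coeffs_monom monom_eq_0)
  moreover have "sum_coeffs [:x, - y:] = x - y"
    by (simp add: sum_coeffs_eq[of _ 1])
  ultimately show ?thesis
    by (auto simp: Nil_of_def)
qed

lemma NilR_sum_closed:
  assumes "(NilR_poly :: 'a::ring poly set) \<subseteq> NilRx"
    and "\<And>i. i \<in> I \<Longrightarrow> (f i :: 'a) \<in> NilR"
  shows "sum f I \<in> NilR"
  using assms(2)
proof (induction I rule: infinite_finite_induct)
  case (insert i I)
  have "f i - (0 - sum f I) \<in> NilR"
    using insert by (intro NilR_diff_closed[OF assms(1)] zero_mem_Nil_of) auto
  then show ?case using insert by simp
qed (simp_all add: zero_mem_Nil_of)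

lemma fps_nth_Suc_if_eq_linear:
  fixes Z :: "'b::ring fps" and c :: 'b
  defines "C \<equiv> fps_of_poly (monom c 1)"
  assumes "Z = C + Z * C"
  shows "Z $ Suc k = mpow (*) c k"
proof -
  have ZC_Suc: "(Z * C) $ Suc k = Z $ k * c" for k
  proof -
    have "Z $ i * C $ (Suc k - i) = (if i = k then Z $ k * c else 0)" if "i \<le> Suc k" for i
      using that by (auto simp: C_def)
    then show ?thesis
      by (simp add: fps_mult_nth)
  qed
  have "Z $ 0 = 0"
    using arg_cong[OF assms(2), of "\<lambda>g. g $ 0"] by (simp add: fps_mult_nth C_def)
  then show ?thesis
  proof (induction k)
    case 0
    then show ?case using arg_cong[OF assms(2), of "\<lambda>g. g $ 1"] ZC_Suc[of 0]
      by (simp add: C_def)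
  next
    case (Suc k)
    then show ?case using arg_cong[OF assms(2), of "\<lambda>g. g $ Suc (Suc k)"] ZC_Suc[of "Suc k"]
      by (simp add: C_def)
  qed
qed

lemma mem_NilR_if_linear_poly_mem_NilRx:
  fixes a y :: "'a::ring"
  assumes "[:a, y - a * y:] \<in> NilRx"
  shows "y \<in> NilR"
proof -
  let ?p = "[:a, y - a * y:]"
  obtain n where n: "mpow pmult ?p n = 0"
    using assms by (auto simp: Nil_of_def)
  define P where "P = (\<Sum>i\<le>n. mpow pmult ?p i)"
  define f F where "f = fps_of_poly ?p" and "F = fps_of_poly P"
  have "mpow (*) f n = 0"
    using n by (simp add: f_def fps_of_poly_mpow[symmetric])
  then have F_quasi_inverse: "F * f = F - f"
    using sum_mpow_quasi_inverse by (simp add: F_def P_def fps_of_poly_sum fps_of_poly_mpow f_def)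
  define A C where "A = fps_const a" and "C = fps_of_poly (monom y 1)"
  have f_eq: "f = A + (C - A * C)"
    by (rule fps_ext) (auto simp: f_def A_def C_def coeff_pCons split: nat.split)
  define Z where "Z = F - A - F * A"
  have "Z - C - Z * C = F - (A + (C - A * C)) - F * (A + (C - A * C))"
    by (simp add: Z_def algebra_simps)
  also have "\<dots> = 0"
    using F_quasi_inverse by (simp add: f_eq)
  finally have "Z = C + Z * C"
    by (simp add: algebra_simps)
  then have "Z $ Suc (degree P) = mpow (*) y (degree P)"
    unfolding C_def by (rule fps_nth_Suc_if_eq_linear)
  moreover have "Z $ Suc (degree P) = 0"
    by (simp add: Z_def F_def A_def coeff_eq_0)
  ultimately show ?thesis
    unfolding Nil_of_def by auto
qed

lemma geometric_sum_mem_NilR: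
  assumes H: "(NilR_poly :: 'a::ring poly set) \<subseteq> NilRx"
    and "(b :: 'a) \<in> NilR" and a: "mpow (*) a M = 0"
  shows "(\<Sum>i<M. mpow (*) a i * b) \<in> NilR"
proof -
  define S where "S = (\<Sum>i<M. mpow (*) a i * b)"
  have "a * S = (\<Sum>i<M. mpow (*) a (Suc i) * b)"
    using mpow_Suc_add[of a 0] by (simp add: S_def sum_distrib_left mult.assoc[symmetric])
  also have "\<dots> = (\<Sum>i<Suc M. mpow (*) a i * b) - a * b"
    by (subst sum.lessThan_Suc_shift) simp
  also have "\<dots> = S - a * b"
    using a by (simp add: S_def)
  finally have "(b + S) - a * (b + S) = b"
    by (simp add: algebra_simps)
  moreover have "a \<in> NilR"
    using a by (auto simp: Nil_of_def)
  ultimately have "[:a, (b + S) - a * (b + S):] \<in> NilRx"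
    using H pCons_mem_NilR_poly \<open>b \<in> NilR\<close> by auto
  then have "b + S \<in> NilR"
    by (rule mem_NilR_if_linear_poly_mem_NilRx)
  from NilR_diff_closed[OF H this \<open>b \<in> NilR\<close>] show ?thesis
    by (simp add: S_def)
qed

lemma NilR_mult_closed:
  assumes H: "(NilR_poly :: 'a::ring poly set) \<subseteq> NilRx"
    and a: "(a :: 'a) \<in> NilR" and b: "b \<in> NilR"
  shows "a * b \<in> NilR"
proof -
  obtain m where "mpow (*) a m = 0"
    using a by (auto simp: Nil_of_def)
  define M where "M = Suc m"
  then have aM: "mpow (*) a M = 0"
    using mpow_eq_0_mono[OF \<open>mpow (*) a m = 0\<close>] by simp
  have "mpow (*) a k * b \<in> NilR" for k
  proof (induction "M - k" arbitrary: k rule: less_induct)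
    case less
    show ?case
    proof (cases "M \<le> k")
      case True
      then show ?thesis
        using mpow_eq_0_mono[OF aM] by (simp add: zero_mem_Nil_of)
    next
      case False
      define c where "c = mpow (*) a k"
      have c_pow: "mpow (*) c i = mpow (*) a (Suc k * Suc i - 1)" for i
        unfolding c_def by (rule mpow_mpow)
      have "mpow (*) c M = 0"
        unfolding c_pow by (rule mpow_eq_0_mono[OF aM]) simp
      then have "(\<Sum>i<M. mpow (*) c i * b) \<in> NilR"
        by (rule geometric_sum_mem_NilR[OF H b])
      moreover have "(\<Sum>i<M. mpow (*) c i * b) = c * b + (\<Sum>i<m. mpow (*) c (Suc i) * b)"
        unfolding M_def by (subst sum.lessThan_Suc_shift) simp
      moreover have "(\<Sum>i<m. mpow (*) c (Suc i) * b) \<in> NilR"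
      proof (rule NilR_sum_closed[OF H])
        fix i
        have "M - (Suc k * Suc (Suc i) - 1) < M - k"
          using False by (simp add: algebra_simps)
        then show "mpow (*) c (Suc i) * b \<in> NilR"
          unfolding c_pow by (rule less)
      qed
      ultimately have "(c * b + (\<Sum>i<m. mpow (*) c (Suc i) * b)) - (\<Sum>i<m. mpow (*) c (Suc i) * b)
          \<in> NilR"
        by (intro NilR_diff_closed[OF H]) simp_all
      then show ?thesis
        by (simp add: c_def)
    qed
  qed
  from this[of 0] show ?thesis
    by simp
qed

lemma subring_NilRx_if_eq_NilR_poly:
  assumes eq: "NilR_poly = (NilRx :: 'a::ring poly set)"
  shows "is_subring_poly (NilRx :: 'a poly set)"
  unfolding is_subring_poly_def
proof (intro conjI ballI)
  have H: "(NilR_poly :: 'a poly set) \<subseteq> NilRx"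
    using eq by simp
  show "0 \<in> (NilRx :: 'a poly set)"
    unfolding Nil_of_def by (auto intro!: exI[of _ 0])
  fix p q :: "'a poly"
  assume "p \<in> NilRx" "q \<in> NilRx"
  then have p: "coeff p i \<in> NilR" and q: "coeff q i \<in> NilR" for i
    using eq by (auto simp: NilR_poly_def)
  have "p - q \<in> NilR_poly"
    unfolding NilR_poly_def by (auto intro: NilR_diff_closed[OF H p q])
  then show "p - q \<in> NilRx"
    using eq by simp
  have "coeff (pmult p q) i \<in> NilR" for i
    unfolding coeff_pmult by (rule NilR_sum_closed[OF H]) (rule NilR_mult_closed[OF H p q])
  then have "pmult p q \<in> NilR_poly"
    by (simp add: NilR_poly_def)
  then show "pmult p q \<in> NilRx"
    using eq by simp
qed

theorem corollary2p14:
  shows "is_subring_poly (NilRx :: 'a::ring poly set) \<longleftrightarrow> NilR_poly = (NilRx :: 'a poly set)"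
  using NilRx_eq_NilR_poly_if_subring subring_NilRx_if_eq_NilR_poly by blast

end
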